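(* Let $E$ be a directed graph. Then $\mathcal S(E)$ is locally strongly graded in the natural $\mathbb Z$-grading if and only if for all $v\in E^0$ and all $n\in\mathbb Z$ there exist paths $x,y$ in $E$ with $\mathbf s(x)=v$, $\mathbf r(x)=\mathbf r(y)$, and $|x|-|y|=n$.
   Context: A directed graph $E=(E^0,E^1,\mathbf r,\mathbf s)$; paths are finite sequences of edges $e_1\cdots e_n$ with $\mathbf r(e_i)=\mathbf s(e_{i+1})$, vertices being paths of length 0; $|x|$ is the length. $\mathcal S(E)$ is the semigroup with zero generated by $E^0\cup E^1\cup\{e^{-1}:e\in E^1\}$ subject to $vw=\delta_{v,w}v$, $\mathbf s(e)e=e\mathbf r(e)=e$, $\mathbf r(e)e^{-1}=e^{-1}\mathbf s(e)=e^{-1}$, $e^{-1}f=\delta_{e,f}\mathbf r(e)$; it is an inverse semigroup whose nonzero elements are uniquely $xy^{-1}$ with paths $x,y$ and $\mathbf r(x)=\mathbf r(y)$. Natural $\mathbb Z$-grading: $\deg(xy^{-1})=|x|-|y|$, $\mathcal S(E)_n=\deg^{-1}(n)\cup\{0\}$. Natural partial order: $s\le t$ iff $s=tu$ for an idempotent $u$. A graded inverse semigroup $S$ is locally strongly graded if for all $\alpha,\beta$ and $s\in S_{\alpha\beta}\setminus\{0\}$ there is $t\in S_\alpha S_\beta\setminus\{0\}$ with $t\le s$. *)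

theory Defs
  imports Main "HOL-Library.Sublist"
begin

text \<open>A directed graph E = (E0, E1, r, s): vertex set E0, edge set E1,
  source map src and range map rng (only their values on E1 matter).\<close>

definition digraph :: "'v set \<Rightarrow> 'e set \<Rightarrow> ('e \<Rightarrow> 'v) \<Rightarrow> ('e \<Rightarrow> 'v) \<Rightarrow> bool" where
  "digraph E0 E1 src rng \<longleftrightarrow> src ` E1 \<subseteq> E0 \<and> rng ` E1 \<subseteq> E0"

text \<open>A path is represented as a pair (v, es): its source vertex v and its
  list of edges es.  The vertex v as a path of length 0 is (v, []).\<close>

type_synonym ('v,'e) path = "'v \<times> 'e list"

definition is_path :: "'v set \<Rightarrow> 'e set \<Rightarrow> ('e \<Rightarrow> 'v) \<Rightarrow> ('e \<Rightarrow> 'v) \<Rightarrow> ('v,'e) path \<Rightarrow> bool" where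
  "is_path E0 E1 src rng p \<longleftrightarrow>
     fst p \<in> E0 \<and> set (snd p) \<subseteq> E1 \<and>
     (snd p \<noteq> [] \<longrightarrow> src (hd (snd p)) = fst p) \<and>
     (\<forall>i. Suc i < length (snd p) \<longrightarrow> rng (snd p ! i) = src (snd p ! Suc i))"

definition path_src :: "('v,'e) path \<Rightarrow> 'v" where
  "path_src p = fst p"

definition path_rng :: "('e \<Rightarrow> 'v) \<Rightarrow> ('v,'e) path \<Rightarrow> 'v" where
  "path_rng rng p = (if snd p = [] then fst p else rng (last (snd p)))"

definition path_len :: "('v,'e) path \<Rightarrow> nat" where
  "path_len p = length (snd p)"

definition path_prefix :: "('v,'e) path \<Rightarrow> ('v,'e) path \<Rightarrow> bool" where
  "path_prefix x y \<longleftrightarrow> fst x = fst y \<and> prefix (snd x) (snd y)"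

text \<open>If x is a prefix of y, y = x \<cdot> (y minus x); extending a path z by that rest.\<close>
definition path_ext :: "('v,'e) path \<Rightarrow> ('v,'e) path \<Rightarrow> ('v,'e) path \<Rightarrow> ('v,'e) path" where
  "path_ext z x y = (fst z, snd z @ drop (length (snd x)) (snd y))"

text \<open>Elements: None is the zero, Some (x, y) is x y^{-1}.\<close>

definition SE :: "'v set \<Rightarrow> 'e set \<Rightarrow> ('e \<Rightarrow> 'v) \<Rightarrow> ('e \<Rightarrow> 'v) \<Rightarrow> (('v,'e) path \<times> ('v,'e) path) option set" where
  "SE E0 E1 src rng = {None} \<union>
     {Some (x, y) | x y. is_path E0 E1 src rng x \<and> is_path E0 E1 src rng y \<and> path_rng rng x = path_rng rng y}"

text \<open>(x y^{-1})(z w^{-1}) = x p w^{-1} if z = y p;  x (w q)^{-1} if y = z q;  0 otherwise.\<close>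
fun SE_mult :: "(('v,'e) path \<times> ('v,'e) path) option \<Rightarrow> (('v,'e) path \<times> ('v,'e) path) option \<Rightarrow> (('v,'e) path \<times> ('v,'e) path) option" where
  "SE_mult (Some (x, y)) (Some (z, w)) =
     (if path_prefix y z then Some (path_ext x y z, w)
      else if path_prefix z y then Some (x, path_ext w z y)
      else None)"
| "SE_mult _ _ = None"

definition SE_deg :: "(('v,'e) path \<times> ('v,'e) path) option \<Rightarrow> int" where
  "SE_deg s = (case s of None \<Rightarrow> 0 | Some (x, y) \<Rightarrow> int (path_len x) - int (path_len y))"

definition SE_comp :: "'v set \<Rightarrow> 'e set \<Rightarrow> ('e \<Rightarrow> 'v) \<Rightarrow> ('e \<Rightarrow> 'v) \<Rightarrow> int \<Rightarrow> (('v,'e) path \<times> ('v,'e) path) option set" where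
  "SE_comp E0 E1 src rng n = {s \<in> SE E0 E1 src rng. s = None \<or> SE_deg s = n}"

definition nat_le :: "'a set \<Rightarrow> ('a \<Rightarrow> 'a \<Rightarrow> 'a) \<Rightarrow> 'a \<Rightarrow> 'a \<Rightarrow> bool" where
  "nat_le S m s t \<longleftrightarrow> (\<exists>u\<in>S. m u u = u \<and> s = m t u)"

definition set_prod :: "('a \<Rightarrow> 'a \<Rightarrow> 'a) \<Rightarrow> 'a set \<Rightarrow> 'a set \<Rightarrow> 'a set" where
  "set_prod m A B = {m a b | a b. a \<in> A \<and> b \<in> B}"

definition locally_strongly_graded ::
  "'a set \<Rightarrow> ('a \<Rightarrow> 'a \<Rightarrow> 'a) \<Rightarrow> 'a \<Rightarrow> (int \<Rightarrow> 'a set) \<Rightarrow> bool" where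
  "locally_strongly_graded S m z G \<longleftrightarrow>
     (\<forall>\<alpha> \<beta>. \<forall>s \<in> G (\<alpha> + \<beta>) - {z}.
        \<exists>t \<in> set_prod m (G \<alpha>) (G \<beta>) - {z}. nat_le S m t s)"

end

theory Submission
  imports Defs
begin

text \<open>If S(E) is locally strongly graded, apply the definition to a vertex v = v v^-1,
  which lies in the component of degree 0 = n + (-n): a nonzero t = a b \<le> v with
  a = x y^-1 of degree n forces s(x) = v, so x, y are the required paths.  Conversely,
  given s = x y^-1 of degree \<alpha> + \<beta>, choose paths p, q from r(x) with
  |p| - |q| = \<alpha> - |x|; then a = (x p) q^-1 has degree \<alpha>, b = q (y p)^-1 has degree \<beta>,
  and a b = (x p) (y p)^-1 = s (y p) (y p)^-1 \<le> s.\<close>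

definition path_append :: "('v,'e) path \<Rightarrow> ('v,'e) path \<Rightarrow> ('v,'e) path" where
  "path_append x p = (fst x, snd x @ snd p)"

lemma is_path_iff_successively:
  "is_path E0 E1 src rng (v, es) \<longleftrightarrow>
     v \<in> E0 \<and> set es \<subseteq> E1 \<and> (es \<noteq> [] \<longrightarrow> src (hd es) = v) \<and>
     successively (\<lambda>e f. rng e = src f) es"
  by (simp add: is_path_def successively_conv_nth)

lemma is_path_append:
  assumes "is_path E0 E1 src rng x" and "is_path E0 E1 src rng p"
    and "path_src p = path_rng rng x"
  shows "is_path E0 E1 src rng (path_append x p)"
  using assms
  by (cases x; cases p)
     (auto simp: is_path_iff_successively path_append_def path_src_def path_rng_def
        successively_append_iff split: if_splits)

lemma path_rng_append:
  assumes "path_src p = path_rng rng x"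
  shows "path_rng rng (path_append x p) = path_rng rng p"
  using assms by (auto simp: path_append_def path_src_def path_rng_def)

lemma path_len_append: "path_len (path_append x p) = path_len x + path_len p"
  by (simp add: path_append_def path_len_def)

lemma path_rng_in_vertices:
  assumes "digraph E0 E1 src rng" and "is_path E0 E1 src rng x"
  shows "path_rng rng x \<in> E0"
proof -
  have "snd x \<noteq> [] \<Longrightarrow> last (snd x) \<in> E1"
    using assms(2) last_in_set[of "snd x"] by (auto simp: is_path_def)
  then show ?thesis using assms by (auto simp: digraph_def is_path_def path_rng_def)
qed

lemma Some_in_SE_iff:
  "Some (x, y) \<in> SE E0 E1 src rng \<longleftrightarrow>
     is_path E0 E1 src rng x \<and> is_path E0 E1 src rng y \<and> path_rng rng x = path_rng rng y"
  unfolding SE_def by blast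

lemma Some_in_SE_comp_iff:
  "Some (x, y) \<in> SE_comp E0 E1 src rng n \<longleftrightarrow>
     is_path E0 E1 src rng x \<and> is_path E0 E1 src rng y \<and> path_rng rng x = path_rng rng y \<and>
     int (path_len x) - int (path_len y) = n"
  by (auto simp: SE_comp_def Some_in_SE_iff SE_deg_def)

lemma SE_mult_eq_SomeD:
  assumes "SE_mult a b = Some (x', y')"
  shows "\<exists>x y. a = Some (x, y) \<and> fst x' = fst x"
proof -
  obtain x y z w where "a = Some (x, y)" and "b = Some (z, w)"
    using assms by (cases "(a, b)" rule: SE_mult.cases) auto
  with assms show ?thesis by (auto simp: path_ext_def split: if_splits)
qed

lemma SE_mult_cancel: "SE_mult (Some (x, q)) (Some (q, y)) = Some (x, y)"
  by (simp add: path_prefix_def path_ext_def)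

lemma SE_mult_append_idem:
  "SE_mult (Some (x, y)) (Some (path_append y p, path_append y p)) =
     Some (path_append x p, path_append y p)"
  by (simp add: path_prefix_def path_ext_def path_append_def)

lemma paths_of_degree_if_locally_strongly_graded:
  fixes E0 :: "'v set" and E1 :: "'e set"
  assumes "locally_strongly_graded (SE E0 E1 src rng) SE_mult None (SE_comp E0 E1 src rng)"
    and "v \<in> E0"
  shows "\<exists>x y. is_path E0 E1 src rng x \<and> is_path E0 E1 src rng y \<and>
           path_src x = v \<and> path_rng rng x = path_rng rng y \<and> int (path_len x) - int (path_len y) = n"
proof -
  define s where "s = Some ((v, [] :: 'e list), (v, [] :: 'e list))"
  have "s \<in> SE_comp E0 E1 src rng (n + - n) - {None}"
    using \<open>v \<in> E0\<close> by (simp add: s_def Some_in_SE_comp_iff is_path_def path_len_def)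
  then obtain t
    where t: "t \<in> set_prod SE_mult (SE_comp E0 E1 src rng n) (SE_comp E0 E1 src rng (- n)) - {None}"
    and "nat_le (SE E0 E1 src rng) SE_mult t s"
    using assms(1) unfolding locally_strongly_graded_def by blast
  then obtain u where "t = SE_mult s u" unfolding nat_le_def by blast
  obtain a b where ab: "t = SE_mult a b" and a: "a \<in> SE_comp E0 E1 src rng n"
    using t by (auto simp: set_prod_def)
  obtain t1 t2 where t12: "t = Some (t1, t2)" using t by auto
  with \<open>t = SE_mult s u\<close> have "SE_mult s u = Some (t1, t2)" by simp
  then have "fst t1 = v" by (auto simp: s_def dest: SE_mult_eq_SomeD)
  moreover from ab t12 have "SE_mult a b = Some (t1, t2)" by simp
  then obtain x y where "a = Some (x, y)" and "fst t1 = fst x"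
    by (blast dest: SE_mult_eq_SomeD)
  ultimately show ?thesis
    using a by (intro exI[of _ x] exI[of _ y]) (auto simp: Some_in_SE_comp_iff path_src_def)
qed

lemma locally_strongly_graded_if_paths_of_all_degrees:
  assumes "digraph E0 E1 src rng"
    and paths: "\<forall>v \<in> E0. \<forall>n :: int. \<exists>x y. is_path E0 E1 src rng x \<and> is_path E0 E1 src rng y \<and>
            path_src x = v \<and> path_rng rng x = path_rng rng y \<and> int (path_len x) - int (path_len y) = n"
  shows "locally_strongly_graded (SE E0 E1 src rng) SE_mult None (SE_comp E0 E1 src rng)"
  unfolding locally_strongly_graded_def
proof (intro allI ballI)
  fix \<alpha> \<beta> s assume "s \<in> SE_comp E0 E1 src rng (\<alpha> + \<beta>) - {None}"
  then obtain x y where s: "s = Some (x, y)" and "Some (x, y) \<in> SE_comp E0 E1 src rng (\<alpha> + \<beta>)"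
    by (cases s) auto
  then have x: "is_path E0 E1 src rng x" and y: "is_path E0 E1 src rng y"
    and xy: "path_rng rng x = path_rng rng y" and deg: "int (path_len x) - int (path_len y) = \<alpha> + \<beta>"
    by (auto simp: Some_in_SE_comp_iff)
  obtain p q where p: "is_path E0 E1 src rng p" and q: "is_path E0 E1 src rng q"
    and sp: "path_src p = path_rng rng x" and "path_rng rng p = path_rng rng q"
    and pq: "int (path_len p) - int (path_len q) = \<alpha> - int (path_len x)"
    using paths path_rng_in_vertices[OF assms(1) x] by blast
  moreover have "path_src p = path_rng rng y" using sp xy by simp
  ultimately have "is_path E0 E1 src rng (path_append x p)"
    and yp: "is_path E0 E1 src rng (path_append y p)"
    and "path_rng rng (path_append x p) = path_rng rng q"
    and "path_rng rng (path_append y p) = path_rng rng q"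
    using x y is_path_append path_rng_append by metis+
  with p q have a: "Some (path_append x p, q) \<in> SE_comp E0 E1 src rng \<alpha>"
    and b: "Some (q, path_append y p) \<in> SE_comp E0 E1 src rng \<beta>"
    using deg pq
    by (auto simp: Some_in_SE_comp_iff path_len_append)
  have "Some (path_append y p, path_append y p) \<in> SE E0 E1 src rng"
    using yp by (simp add: Some_in_SE_iff)
  let ?t = "Some (path_append x p, path_append y p)"
  have "?t \<in> set_prod SE_mult (SE_comp E0 E1 src rng \<alpha>) (SE_comp E0 E1 src rng \<beta>) - {None}"
  proof -
    have "?t = SE_mult (Some (path_append x p, q)) (Some (q, path_append y p))"
      by (rule SE_mult_cancel[symmetric])
    then show ?thesis using a b unfolding set_prod_def by blast
  qed
  moreover have "nat_le (SE E0 E1 src rng) SE_mult ?t s"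
    using \<open>Some (path_append y p, path_append y p) \<in> SE E0 E1 src rng\<close>
    unfolding nat_le_def s by (metis SE_mult_cancel SE_mult_append_idem)
  ultimately show "\<exists>t \<in> set_prod SE_mult (SE_comp E0 E1 src rng \<alpha>) (SE_comp E0 E1 src rng \<beta>) - {None}.
      nat_le (SE E0 E1 src rng) SE_mult t s" by blast
qed

theorem proposition8p9:
  fixes E0 :: "'v set" and E1 :: "'e set" and src rng :: "'e \<Rightarrow> 'v"
  assumes "digraph E0 E1 src rng"
  shows "locally_strongly_graded (SE E0 E1 src rng) SE_mult None (SE_comp E0 E1 src rng)
     \<longleftrightarrow> (\<forall>v \<in> E0. \<forall>n :: int. \<exists>x y. is_path E0 E1 src rng x \<and> is_path E0 E1 src rng y \<and>
            path_src x = v \<and> path_rng rng x = path_rng rng y \<and>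
            int (path_len x) - int (path_len y) = n)"
proof
  assume "locally_strongly_graded (SE E0 E1 src rng) SE_mult None (SE_comp E0 E1 src rng)"
  then show "\<forall>v \<in> E0. \<forall>n :: int. \<exists>x y. is_path E0 E1 src rng x \<and> is_path E0 E1 src rng y \<and>
      path_src x = v \<and> path_rng rng x = path_rng rng y \<and> int (path_len x) - int (path_len y) = n"
    by (intro ballI allI paths_of_degree_if_locally_strongly_graded)
qed (rule locally_strongly_graded_if_paths_of_all_degrees[OF assms])

end
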